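(* For each $n$, let $G_s(\alpha,k)$ be a uniform random temporal star on a star with $n$ vertices, where $\alpha=\alpha(n)$ and $k=k(n)$ satisfy $\alpha\ge 2n$ and $k\ge 6n\ln n$. Then the probability that $G_s(\alpha,k)$ is explorable (all its edges can be explored) tends to $1$ as $n\to\infty$.
   Context: A uniform random temporal star $G_s(\alpha,k)$: take a star $G_s$ with center $c$ and $n-1$ leaves; each edge independently receives $k$ labels, each chosen independently and uniformly at random from $\{1,2,\dots,\alpha\}$ (labels are the discrete times at which the edge is available). A journey is a sequence of time edges $(u,u_1,l_1),(u_1,u_2,l_2),\dots$, each $l_t$ a label of the edge traversed, with strictly increasing labels. The temporal star is explorable if there is a journey starting and ending at $c$ that visits every vertex. *)

theory Defs
  imports "HOL-Probability.Probability"
begin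

text \<open>Star on n vertices: center 0, leaves 1..n-1. A labelling L assigns to leaf i
  (i.e. edge {0,i}) its k labels L i 0, ..., L i (k-1), each in {1..alpha}.\<close>

definition star_edge :: "nat \<Rightarrow> nat \<Rightarrow> nat \<Rightarrow> bool" where
  "star_edge n u v \<longleftrightarrow> (u = 0 \<and> 1 \<le> v \<and> v < n) \<or> (v = 0 \<and> 1 \<le> u \<and> u < n)"

definition edge_labels :: "nat \<Rightarrow> (nat \<Rightarrow> nat \<Rightarrow> nat) \<Rightarrow> nat \<Rightarrow> nat \<Rightarrow> nat set" where
  "edge_labels k L u v = {L (max u v) j | j. j < k}"

definition is_journey :: "nat \<Rightarrow> nat \<Rightarrow> (nat \<Rightarrow> nat \<Rightarrow> nat) \<Rightarrow> (nat \<times> nat \<times> nat) list \<Rightarrow> bool" where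
  "is_journey n k L J \<longleftrightarrow>
     (\<forall>(u, v, l) \<in> set J. star_edge n u v \<and> l \<in> edge_labels k L u v) \<and>
     (\<forall>t. Suc t < length J \<longrightarrow> fst (snd (J ! t)) = fst (J ! Suc t)) \<and>
     sorted_wrt (<) (map (\<lambda>(u, v, l). l) J)"

definition journey_vertices :: "(nat \<times> nat \<times> nat) list \<Rightarrow> nat set" where
  "journey_vertices J = {fst e | e. e \<in> set J} \<union> {fst (snd e) | e. e \<in> set J}"

definition explorable :: "nat \<Rightarrow> nat \<Rightarrow> (nat \<Rightarrow> nat \<Rightarrow> nat) \<Rightarrow> bool" where
  "explorable n k L \<longleftrightarrow> (\<exists>J. J \<noteq> [] \<and> is_journey n k L J \<and> fst (hd J) = 0 \<and>
       fst (snd (last J)) = 0 \<and> {0..<n} \<subseteq> journey_vertices J)"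

definition labellings :: "nat \<Rightarrow> nat \<Rightarrow> nat \<Rightarrow> (nat \<Rightarrow> nat \<Rightarrow> nat) set" where
  "labellings n alpha k = {L. \<forall>i j. (if 1 \<le> i \<and> i < n \<and> j < k then L i j \<in> {1..alpha} else L i j = 0)}"

text \<open>Uniform random temporal star: uniform distribution on labellings
  (equivalently, all labels independent and uniform in {1..alpha}).\<close>
definition uniform_random_temporal_star :: "nat \<Rightarrow> nat \<Rightarrow> nat \<Rightarrow> (nat \<Rightarrow> nat \<Rightarrow> nat) pmf" where
  "uniform_random_temporal_star n alpha k = pmf_of_set (labellings n alpha k)"

end

theory Submission
  imports Defs "HOL-Real_Asymp.Real_Asymp"
begin

(* Cut {1..alpha} into 2(n-1) consecutive time blocks of length s = alpha div (2(n-1)).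
  If for every t the leaf t div 2 + 1 has a label in block t, the center can visit the leaves
  1, 2, ..., n-1 in turn, leaving for leaf i in block 2i-2 and returning in block 2i-1.
  A fixed leaf misses a fixed block with probability (1 - s/alpha)^k \<le> exp (-k/(4(n-1))),
  which is at most n powr (-3/2) for k \<ge> 6 n ln n; a union bound over the 2(n-1) blocks
  shows that the star fails to be explorable with probability O(1/sqrt n). *)

definition star_tour :: "nat \<Rightarrow> (nat \<Rightarrow> nat) \<Rightarrow> (nat \<times> nat \<times> nat) list" where
  "star_tour m g =
     map (\<lambda>t. if even t then (0, t div 2 + 1, g t) else (t div 2 + 1, 0, g t)) [0..<2*m]"

lemma length_star_tour [simp]: "length (star_tour m g) = 2 * m"
  by (simp add: star_tour_def)

lemma nth_star_tour:
  "t < 2 * m \<Longrightarrow>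
     star_tour m g ! t = (if even t then (0, t div 2 + 1, g t) else (t div 2 + 1, 0, g t))"
  by (simp add: star_tour_def)

lemma star_tour_start: "m \<ge> 1 \<Longrightarrow> fst (hd (star_tour m g)) = 0"
  by (simp add: star_tour_def upt_conv_Cons)

lemma star_tour_end: "m \<ge> 1 \<Longrightarrow> fst (snd (last (star_tour m g))) = 0"
proof -
  assume "m \<ge> 1"
  then have "last (star_tour m g) = star_tour m g ! (2 * m - 1)"
    by (simp add: last_conv_nth star_tour_def)
  then show ?thesis
    using \<open>m \<ge> 1\<close> by (simp add: nth_star_tour)
qed

lemma journey_vertices_star_tour:
  assumes "m \<ge> 1"
  shows "journey_vertices (star_tour m g) = {0..m}"
proof (intro equalityI subsetI)
  fix v assume "v \<in> journey_vertices (star_tour m g)"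
  then obtain t where "t < 2 * m" "v \<in> {fst (star_tour m g ! t), fst (snd (star_tour m g ! t))}"
    by (auto simp: journey_vertices_def in_set_conv_nth)
  then show "v \<in> {0..m}"
    by (auto simp: nth_star_tour split: if_splits)
next
  fix v assume v: "v \<in> {0..m}"
  show "v \<in> journey_vertices (star_tour m g)"
  proof (cases "v = 0")
    case True
    have "star_tour m g ! 0 \<in> set (star_tour m g)"
      using assms by (intro nth_mem) simp
    moreover have "v = fst (star_tour m g ! 0)"
      using assms True by (simp add: nth_star_tour)
    ultimately show ?thesis
      unfolding journey_vertices_def by blast
  next
    case False
    with v have "star_tour m g ! (2 * (v - 1)) \<in> set (star_tour m g)"
      by (intro nth_mem) simp
    moreover have "v = fst (snd (star_tour m g ! (2 * (v - 1))))"
      using v False by (simp add: nth_star_tour)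
    ultimately show ?thesis
      unfolding journey_vertices_def by blast
  qed
qed

lemma is_journey_star_tour:
  assumes "m < n"
    and mono: "strict_mono_on {..<2*m} g"
    and labels: "\<And>t. t < 2 * m \<Longrightarrow> g t \<in> edge_labels k L 0 (t div 2 + 1)"
  shows "is_journey n k L (star_tour m g)"
  unfolding is_journey_def
proof (intro conjI allI impI ballI)
  fix e assume "e \<in> set (star_tour m g)"
  then obtain t where t: "t < 2 * m"
    and e: "e = (if even t then (0, t div 2 + 1, g t) else (t div 2 + 1, 0, g t))"
    by (auto simp: star_tour_def)
  have "t div 2 + 1 < n"
    using t \<open>m < n\<close> by linarith
  with labels[OF t] show "case e of (u, v, l) \<Rightarrow> star_edge n u v \<and> l \<in> edge_labels k L u v"
    by (auto simp: e star_edge_def edge_labels_def)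
next
  fix t assume "Suc t < length (star_tour m g)"
  then show "fst (snd (star_tour m g ! t)) = fst (star_tour m g ! Suc t)"
    by (auto simp: nth_star_tour elim: oddE)
next
  show "sorted_wrt (<) (map (\<lambda>(u, v, l). l) (star_tour m g))"
    unfolding star_tour_def map_map sorted_wrt_map
    by (rule sorted_wrt_mono_rel[OF _ sorted_wrt_upt]) (auto intro: strict_mono_onD[OF mono])
qed

lemma explorable_if_increasing_tour_labels:
  assumes "n \<ge> 2"
    and "strict_mono_on {..<2*(n-1)} g"
    and "\<And>t. t < 2 * (n - 1) \<Longrightarrow> g t \<in> edge_labels k L 0 (t div 2 + 1)"
  shows "explorable n k L"
proof -
  have "star_tour (n - 1) g \<noteq> []" "{0..<n} \<subseteq> journey_vertices (star_tour (n - 1) g)"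
    using assms(1) by (auto simp: journey_vertices_star_tour simp flip: length_greater_0_conv)
  with assms show ?thesis
    unfolding explorable_def
    by (intro exI[of _ "star_tour (n - 1) g"])
       (simp add: is_journey_star_tour star_tour_start star_tour_end)
qed

definition time_block :: "nat \<Rightarrow> nat \<Rightarrow> nat set" where
  "time_block s t = {t * s + 1 .. (t + 1) * s}"

lemma card_time_block [simp]: "card (time_block s t) = s"
  by (simp add: time_block_def)

lemma time_block_subset:
  assumes "t < d" "d * s \<le> a"
  shows "time_block s t \<subseteq> {1..a}"
proof -
  have "(t + 1) * s \<le> d * s"
    using assms(1) by (intro mult_right_mono) auto
  with assms(2) show ?thesis
    by (auto simp: time_block_def)
qed

lemma time_block_less:
  assumes "t < t'" "x \<in> time_block s t" "y \<in> time_block s t'"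
  shows "x < y"
proof -
  have "x \<le> (t + 1) * s"
    using assms(2) by (simp add: time_block_def)
  also have "\<dots> \<le> t' * s"
    using assms(1) by (intro mult_right_mono) auto
  also have "\<dots> < y"
    using assms(3) by (simp add: time_block_def)
  finally show ?thesis .
qed

lemma explorable_if_labels_hit_time_blocks:
  assumes "n \<ge> 2"
    and hit: "\<And>t. t < 2 * (n - 1) \<Longrightarrow> \<exists>j<k. L (t div 2 + 1) j \<in> time_block s t"
  shows "explorable n k L"
proof -
  have "\<forall>t. \<exists>l. t < 2 * (n - 1) \<longrightarrow> l \<in> edge_labels k L 0 (t div 2 + 1) \<inter> time_block s t"
    using hit by (fastforce simp: edge_labels_def)
  then obtain g where
    g: "\<And>t. t < 2 * (n - 1) \<Longrightarrow> g t \<in> edge_labels k L 0 (t div 2 + 1) \<inter> time_block s t"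
    by metis
  have "strict_mono_on {..<2*(n-1)} g"
    by (rule strict_mono_onI) (use g time_block_less in blast)
  then show ?thesis
    by (rule explorable_if_increasing_tour_labels[OF \<open>n \<ge> 2\<close>]) (use g in blast)
qed

lemma uniform_random_temporal_star_eq_Pi_pmf:
  assumes "alpha \<ge> 1"
  shows "uniform_random_temporal_star n alpha k =
    map_pmf (\<lambda>f i j. f (i,j)) (Pi_pmf ({1..<n}\<times>{..<k}) 0 (\<lambda>_. pmf_of_set {1..alpha}))"
proof -
  define D where "D = {1..<n}\<times>{..<k}"
  define F where "F = PiE_dflt D 0 (\<lambda>_. {1..alpha})"
  have fin: "finite D"
    by (simp add: D_def)
  have "Pi_pmf D 0 (\<lambda>_. pmf_of_set {1..alpha}) = pmf_of_set F"
    unfolding F_def using assms fin by (intro Pi_pmf_of_set) auto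
  moreover have "map_pmf (\<lambda>f i j. f (i,j)) (pmf_of_set F) = pmf_of_set ((\<lambda>f i j. f (i,j)) ` F)"
    using assms fin by (intro map_pmf_of_set_inj) (auto simp: F_def inj_on_def fun_eq_iff)
  moreover have "(\<lambda>f i j. f (i,j)) ` F = labellings n alpha k"
  proof (intro equalityI subsetI)
    fix L assume "L \<in> (\<lambda>f i j. f (i,j)) ` F"
    then show "L \<in> labellings n alpha k"
      by (auto simp: F_def PiE_dflt_def labellings_def D_def)
  next
    fix L assume "L \<in> labellings n alpha k"
    then have "case_prod L \<in> F"
      unfolding labellings_def F_def PiE_dflt_def D_def by (auto split: if_splits)
    then show "L \<in> (\<lambda>f i j. f (i,j)) ` F"
      by (intro image_eqI[of _ _ "case_prod L"]) auto
  qed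
  ultimately show ?thesis
    unfolding uniform_random_temporal_star_def D_def by simp
qed

lemma prob_leaf_labels_avoid:
  assumes "alpha \<ge> 1" "1 \<le> i" "i < n" "I \<subseteq> {1..alpha}"
  shows "measure_pmf.prob (uniform_random_temporal_star n alpha k) {L. \<forall>j<k. L i j \<notin> I}
         = (1 - real (card I) / real alpha) ^ k"
proof -
  define D where "D = {1..<n}\<times>{..<k}"
  define Di where "Di = {i}\<times>{..<k}"
  define B where "B x = (if x \<in> Di then -I else UNIV)" for x :: "nat \<times> nat"
  have fin: "finite D"
    by (simp add: D_def)
  have "Di \<subseteq> D"
    using assms by (auto simp: D_def Di_def)
  have preimage: "(\<lambda>f i j. f (i,j)) -` {L. \<forall>j<k. L i j \<notin> I} = Pi D B"
    using assms by (auto simp: Pi_def B_def D_def Di_def)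
  have avoid: "measure_pmf.prob (pmf_of_set {1..alpha}) (-I) = 1 - real (card I) / real alpha"
  proof -
    have "card ({1..alpha} - I) = alpha - card I" "card I \<le> alpha"
      using assms(4) card_mono[OF _ assms(4)] by (auto simp: card_Diff_subset finite_subset)
    moreover have "{1..alpha} \<inter> -I = {1..alpha} - I"
      by auto
    ultimately show ?thesis
      using assms(1) by (simp add: measure_pmf_of_set field_simps of_nat_diff)
  qed
  have "measure_pmf.prob (uniform_random_temporal_star n alpha k) {L. \<forall>j<k. L i j \<notin> I}
      = (\<Prod>x\<in>D. measure_pmf.prob (pmf_of_set {1..alpha}) (B x))"
    unfolding uniform_random_temporal_star_eq_Pi_pmf[OF assms(1)] measure_map_pmf
      D_def[symmetric] preimage
    using fin by (rule measure_Pi_pmf_Pi)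
  also have "\<dots> = (\<Prod>x\<in>D. if x \<in> Di then 1 - real (card I) / real alpha else 1)"
    by (intro prod.cong refl) (simp only: B_def avoid split: if_split, simp)
  also have "\<dots> = (1 - real (card I) / real alpha) ^ k"
    using \<open>Di \<subseteq> D\<close> fin
    by (simp add: prod.If_cases Int_absorb1 Di_def card_cartesian_product)
  finally show ?thesis .
qed

lemma one_minus_power_le_exp:
  fixes x :: real
  assumes "0 \<le> x" "x \<le> 1"
  shows "(1 - x) ^ k \<le> exp (- (real k * x))"
proof -
  have "(1 - x) ^ k \<le> exp (- x) ^ k"
    using assms exp_ge_add_one_self[of "- x"] by (intro power_mono) auto
  then show ?thesis
    by (simp add: exp_of_nat_mult[symmetric])
qed

lemma less_double_mult_div:
  fixes a d :: nat
  assumes "0 < d" "d \<le> a"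
  shows "a < 2 * (d * (a div d))"
proof -
  have "d \<le> d * (a div d)"
    using assms by (simp add: div_greater_zero_iff Suc_le_eq)
  moreover have "a mod d < d"
    using assms(1) by simp
  ultimately show ?thesis
    using mult_div_mod_eq[of d a] by linarith
qed

lemma prob_leaf_misses_time_block_le:
  assumes "t < d" "d \<le> alpha" "1 \<le> i" "i < n"
  shows "measure_pmf.prob (uniform_random_temporal_star n alpha k)
           {L. \<forall>j<k. L i j \<notin> time_block (alpha div d) t}
         \<le> exp (- real k / (2 * real d))"
proof -
  define s where "s = alpha div d"
  have "alpha \<ge> 1" "0 < d"
    using assms by auto
  have blocks_fit: "d * s \<le> alpha"
    unfolding s_def by (rule times_div_less_eq_dividend)
  moreover have "s \<le> d * s"
    using \<open>0 < d\<close> by simp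
  ultimately have "s \<le> alpha"
    by linarith
  have "alpha < 2 * (d * s)"
    unfolding s_def using \<open>0 < d\<close> assms(2) by (rule less_double_mult_div)
  then have "alpha \<le> 2 * d * s"
    by linarith
  then have "real alpha \<le> 2 * real d * real s"
    by (metis of_nat_le_iff of_nat_mult of_nat_numeral)
  then have block_share: "1 / (2 * real d) \<le> real s / real alpha"
    using \<open>0 < d\<close> \<open>alpha \<ge> 1\<close> by (simp add: field_simps)
  have "measure_pmf.prob (uniform_random_temporal_star n alpha k)
          {L. \<forall>j<k. L i j \<notin> time_block s t} = (1 - real s / real alpha) ^ k"
    using assms \<open>alpha \<ge> 1\<close>
    by (subst prob_leaf_labels_avoid[OF _ _ _ time_block_subset[OF assms(1) blocks_fit]]) auto
  also have "\<dots> \<le> exp (- (real k * (real s / real alpha)))"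
    using \<open>s \<le> alpha\<close> \<open>alpha \<ge> 1\<close> by (intro one_minus_power_le_exp) auto
  also have "\<dots> \<le> exp (- real k / (2 * real d))"
    using mult_left_mono[OF block_share, of "real k"] by simp
  finally show ?thesis
    unfolding s_def .
qed

lemma prob_not_explorable_le:
  assumes "n \<ge> 2" "2 * (n - 1) \<le> alpha"
  shows "measure_pmf.prob (uniform_random_temporal_star n alpha k) {L. \<not> explorable n k L}
         \<le> 2 * real (n - 1) * exp (- real k / (4 * real (n - 1)))"
proof -
  define M where "M = uniform_random_temporal_star n alpha k"
  define m where "m = n - 1"
  define E where "E t = {L. \<forall>j<k. L (t div 2 + 1) j \<notin> time_block (alpha div (2 * m)) t}"
    for t
  have miss: "measure_pmf.prob M (E t) \<le> exp (- real k / (4 * real m))" if "t < 2 * m" for t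
    using prob_leaf_misses_time_block_le[OF that, of alpha "t div 2 + 1" n k] that assms
    unfolding M_def E_def m_def by auto
  have "{L. \<not> explorable n k L} \<subseteq> (\<Union>t<2 * m. E t)"
  proof
    fix L assume "L \<in> {L. \<not> explorable n k L}"
    then have "\<not> (\<forall>t<2 * m. \<exists>j<k. L (t div 2 + 1) j \<in> time_block (alpha div (2 * m)) t)"
      using explorable_if_labels_hit_time_blocks[OF \<open>n \<ge> 2\<close>, of k L "alpha div (2 * m)"]
      by (auto simp: m_def)
    then show "L \<in> (\<Union>t<2 * m. E t)"
      by (auto simp: E_def)
  qed
  then have "measure_pmf.prob M {L. \<not> explorable n k L} \<le> measure_pmf.prob M (\<Union>t<2 * m. E t)"
    by (intro measure_pmf.finite_measure_mono) auto
  also have "\<dots> \<le> (\<Sum>t<2 * m. measure_pmf.prob M (E t))"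
    by (rule measure_pmf.finite_measure_subadditive_finite) auto
  also have "\<dots> \<le> 2 * real m * exp (- real k / (4 * real m))"
    using sum_mono[of "{..<2 * m}", OF miss] by simp
  finally show ?thesis
    unfolding M_def m_def .
qed

lemma mult_exp_minus_three_halves_ln:
  fixes x :: real
  assumes "x > 0"
  shows "x * exp (- (3 / 2 * ln x)) = 1 / sqrt x"
proof -
  have "exp (3 / 2 * ln x) = x powr (1 + 1 / 2)"
    using assms by (simp add: powr_def)
  also have "\<dots> = x * sqrt x"
    unfolding powr_add using assms by (simp add: powr_half_sqrt)
  finally show ?thesis
    using assms by (simp add: exp_minus field_simps)
qed

lemma prob_explorable_ge:
  assumes "n \<ge> 2" "2 * n \<le> alpha" "6 * real n * ln (real n) \<le> real k"
  shows "1 - 2 / sqrt (real n)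
         \<le> measure_pmf.prob (uniform_random_temporal_star n alpha k) {L. explorable n k L}"
proof -
  define M where "M = uniform_random_temporal_star n alpha k"
  have "real k / (4 * real (n - 1)) \<ge> 3 / 2 * ln (real n)"
  proof -
    have "3 / 2 * ln (real n) * (4 * real (n - 1)) \<le> 6 * real n * ln (real n)"
      using assms(1) by (simp add: mult_right_mono)
    also have "\<dots> \<le> real k"
      by (fact assms(3))
    finally show ?thesis
      using assms(1) by (simp add: pos_le_divide_eq)
  qed
  then have exp_le: "exp (- real k / (4 * real (n - 1))) \<le> exp (- (3 / 2 * ln (real n)))"
    by simp
  have "measure_pmf.prob M {L. \<not> explorable n k L}
      \<le> 2 * real (n - 1) * exp (- real k / (4 * real (n - 1)))"
    unfolding M_def using assms by (intro prob_not_explorable_le) auto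
  also have "\<dots> \<le> 2 * real n * exp (- (3 / 2 * ln (real n)))"
    using exp_le by (intro mult_mono) auto
  also have "\<dots> = 2 / sqrt (real n)"
    using mult_exp_minus_three_halves_ln[of "real n"] assms(1) by simp
  finally show ?thesis
    using measure_pmf.prob_neg[of M "\<lambda>L. explorable n k L"] unfolding M_def by simp
qed

theorem theorem7:
  fixes alpha k :: "nat \<Rightarrow> nat"
  assumes "\<And>n. alpha n \<ge> 2 * n"
    and "\<And>n. real (k n) \<ge> 6 * real n * ln (real n)"
  shows "(\<lambda>n. measure_pmf.prob (uniform_random_temporal_star n (alpha n) (k n))
             {L. explorable n (k n) L}) \<longlonglongrightarrow> 1"
proof (rule tendsto_sandwich)
  show "\<forall>\<^sub>F n in sequentially. 1 - 2 / sqrt (real n) \<le>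
      measure_pmf.prob (uniform_random_temporal_star n (alpha n) (k n)) {L. explorable n (k n) L}"
    using eventually_ge_at_top[of 2] by eventually_elim (intro prob_explorable_ge assms)
  show "\<forall>\<^sub>F n in sequentially.
      measure_pmf.prob (uniform_random_temporal_star n (alpha n) (k n)) {L. explorable n (k n) L} \<le> 1"
    by simp
  show "(\<lambda>n::nat. 1 - 2 / sqrt (real n)) \<longlonglongrightarrow> 1"
    by real_asymp
qed simp

end
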